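(* Let $d$ be a positive integer and let $X=\{X_k:k\in\mathbb{Z}^d\}$ be a centered complex-valued random field with $E|X_k|^2=E|X_0|^2<\infty$ for all $k$, such that $\varrho'(X,n)\to0$ as $n\to\infty$ and $E X_kX_j=EX_{k-j}X_0$ for all $k,j\in\mathbb{Z}^d$. Let $\lambda\in\mathfrak P:=(-\pi,\pi]^d\setminus\{-\pi,0,\pi\}^d$, and let $\{\lambda^{(1,n)}\}_{n=1}^\infty$, $\{\lambda^{(2,n)}\}_{n=1}^\infty$ be two sequences in $(-\pi,\pi]^d$ converging to $\lambda$. If $\{v^{(n)}\}$ is a sequence in $\mathbb{N}^d$ with $\lim_{n\to\infty}\min\{v^{(n)}_1,\dots,v^{(n)}_d\}=\infty$, then \[\lim_{n\to\infty}E\left[\frac{S_n^{(\lambda^{(1,n)})}S_n^{(\lambda^{(2,n)})}}{V^{(n)}}\right]=0.\]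
   Context: For $\sigma$-fields $\mathcal A,\mathcal B$, $\varrho(\mathcal A,\mathcal B)=\sup\mathrm{Corr}(f,g)$ over real $f\in L^2(\mathcal A)$, $g\in L^2(\mathcal B)$. $\varrho'(X,n)=\sup_{S,T}\varrho(\sigma(X_k:k\in S),\sigma(X_k:k\in T))$ over finite nonempty $S,T\subset\mathbb{Z}^d$ for which some coordinate $u$ satisfies $|k_u-l_u|\ge n$ for all $k\in S,l\in T$. For $\mu\in(-\pi,\pi]^d$, $X_k^{(\mu)}:=e^{-ik\cdot\mu}X_k$. $\mathfrak B_n:=\{w\in\mathbb{N}^d:1\le w_j\le v^{(n)}_j\}$, $V^{(n)}:=\prod_j v^{(n)}_j$, $S_n^{(\mu)}:=\sum_{k\in\mathfrak B_n}X_k^{(\mu)}$. *)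

theory Defs
  imports "HOL-Probability.Probability"
begin

definition sigma_gen :: "'a measure \<Rightarrow> ('i \<Rightarrow> 'a \<Rightarrow> complex) \<Rightarrow> 'i set \<Rightarrow> 'a measure" where
  "sigma_gen M X S = sigma (space M) (\<Union>k\<in>S. {X k -` A \<inter> space M | A. A \<in> sets borel})"

text \<open>Correlation of real random variables (0 if a variance vanishes, by x/0 = 0).\<close>
definition corr :: "'a measure \<Rightarrow> ('a \<Rightarrow> real) \<Rightarrow> ('a \<Rightarrow> real) \<Rightarrow> real" where
  "corr M f g =
     ((\<integral>x. f x * g x \<partial>M) - (\<integral>x. f x \<partial>M) * (\<integral>x. g x \<partial>M)) /
     sqrt (((\<integral>x. (f x)\<^sup>2 \<partial>M) - (\<integral>x. f x \<partial>M)\<^sup>2) * ((\<integral>x. (g x)\<^sup>2 \<partial>M) - (\<integral>x. g x \<partial>M)\<^sup>2))"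

definition max_corr :: "'a measure \<Rightarrow> 'a measure \<Rightarrow> 'a measure \<Rightarrow> real" where
  "max_corr M A B = Sup {corr M f g | f g.
      f \<in> borel_measurable A \<and> integrable M (\<lambda>x. (f x)\<^sup>2) \<and>
      g \<in> borel_measurable B \<and> integrable M (\<lambda>x. (g x)\<^sup>2)}"

definition rho' :: "'a measure \<Rightarrow> (int^'d \<Rightarrow> 'a \<Rightarrow> complex) \<Rightarrow> nat \<Rightarrow> real" where
  "rho' M X n = Sup {max_corr M (sigma_gen M X S) (sigma_gen M X T) | S T.
      finite S \<and> S \<noteq> {} \<and> finite T \<and> T \<noteq> {} \<and>
      (\<exists>u. \<forall>k\<in>S. \<forall>l\<in>T. \<bar>k$u - l$u\<bar> \<ge> int n)}"

definition kdot :: "int^'d \<Rightarrow> real^'d \<Rightarrow> real" where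
  "kdot k \<mu> = (\<Sum>j\<in>UNIV. real_of_int (k$j) * \<mu>$j)"

definition box :: "nat^'d \<Rightarrow> (int^'d) set" where
  "box_def": "box v = {w. \<forall>j. 1 \<le> w$j \<and> w$j \<le> int (v$j)}"

definition partial_sum :: "(int^'d \<Rightarrow> 'a \<Rightarrow> complex) \<Rightarrow> nat^'d \<Rightarrow> real^'d \<Rightarrow> 'a \<Rightarrow> complex" where
  "partial_sum X v \<mu> \<omega> = (\<Sum>k\<in>box v. exp (- \<i> * of_real (kdot k \<mu>)) * X k \<omega>)"

definition vol :: "nat^'d \<Rightarrow> nat" where
  "vol v = (\<Prod>j\<in>UNIV. v$j)"

end

theory Submission
  imports Defs
begin

text \<open>
  Fix a coordinate u with lam_u not in {-pi, 0, pi}. Shifting the box by one step in direction u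
  multiplies the cross moment E[S(mu1) S(mu2)] by exp(-i(mu1_u + mu2_u)), by stationarity of
  E X_k X_j, while the partial sums change only by a sum over the symmetric difference of the two
  boxes, which has at most 2V/v_u points. A Bradley-type bound E|sum_{k in F} c_k X_k|^2 <= C |F|
  for |c_k| <= 1 (from rho'(N) <= 1/2, by averaging over sign patterns within the residue classes
  mod N of one coordinate at a time) and Cauchy-Schwarz therefore give
  |exp(-i(mu1_u + mu2_u)) - 1| |E[S(mu1) S(mu2)]| = O(V / sqrt v_u). Along the given sequences the
  first factor tends to |exp(-2i lam_u) - 1| > 0, so the normalized cross moment tends to 0.
\<close>

definition square_integrable :: "'a measure \<Rightarrow> ('a \<Rightarrow> complex) \<Rightarrow> bool" where
  "square_integrable M f \<longleftrightarrow> f \<in> borel_measurable M \<and> integrable M (\<lambda>x. (cmod (f x))\<^sup>2)"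

definition second_moment :: "'a measure \<Rightarrow> ('a \<Rightarrow> complex) \<Rightarrow> real" where
  "second_moment M f = (\<integral>x. (cmod (f x))\<^sup>2 \<partial>M)"

lemma integral_abs_mult_le_sqrt:
  fixes f g :: "'a \<Rightarrow> real"
  assumes [measurable]: "f \<in> borel_measurable M" "g \<in> borel_measurable M"
    and f2: "integrable M (\<lambda>x. (f x)\<^sup>2)" and g2: "integrable M (\<lambda>x. (g x)\<^sup>2)"
  shows integrable_mult_if_square_integrable: "integrable M (\<lambda>x. f x * g x)"
    and "(\<integral>x. \<bar>f x * g x\<bar> \<partial>M) \<le> sqrt (\<integral>x. (f x)\<^sup>2 \<partial>M) * sqrt (\<integral>x. (g x)\<^sup>2 \<partial>M)"
proof -
  show fg: "integrable M (\<lambda>x. f x * g x)"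
  proof (rule Bochner_Integration.integrable_bound[of _ "\<lambda>x. (f x)\<^sup>2 + (g x)\<^sup>2"])
    show "AE x in M. norm (f x * g x) \<le> norm ((f x)\<^sup>2 + (g x)\<^sup>2)"
    proof (intro AE_I2)
      fix x
      have "2 * \<bar>f x\<bar> * \<bar>g x\<bar> \<le> (f x)\<^sup>2 + (g x)\<^sup>2"
        using sum_squares_bound[of "\<bar>f x\<bar>" "\<bar>g x\<bar>"] by simp
      moreover have "0 \<le> \<bar>f x\<bar> * \<bar>g x\<bar>" by simp
      ultimately have "\<bar>f x\<bar> * \<bar>g x\<bar> \<le> (f x)\<^sup>2 + (g x)\<^sup>2" by linarith
      then show "norm (f x * g x) \<le> norm ((f x)\<^sup>2 + (g x)\<^sup>2)" by (simp add: abs_mult)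
    qed
  qed (use f2 g2 in auto)
  have "(\<integral>\<^sup>+x. ennreal \<bar>f x\<bar> * ennreal \<bar>g x\<bar> \<partial>M) = ennreal (\<integral>x. \<bar>f x * g x\<bar> \<partial>M)"
    using nn_integral_eq_integral[of M "\<lambda>x. \<bar>f x * g x\<bar>"] integrable_abs[OF fg]
    by (simp add: abs_mult ennreal_mult)
  then have "ennreal ((\<integral>x. \<bar>f x * g x\<bar> \<partial>M)\<^sup>2) = (\<integral>\<^sup>+x. ennreal \<bar>f x\<bar> * ennreal \<bar>g x\<bar> \<partial>M)\<^sup>2"
    by (simp add: ennreal_power)
  also have "\<dots> \<le> (\<integral>\<^sup>+x. ennreal \<bar>f x\<bar> ^ 2 \<partial>M) * (\<integral>\<^sup>+x. ennreal \<bar>g x\<bar> ^ 2 \<partial>M)"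
    by (rule Cauchy_Schwarz_nn_integral) auto
  also have "\<dots> = ennreal ((\<integral>x. (f x)\<^sup>2 \<partial>M) * (\<integral>x. (g x)\<^sup>2 \<partial>M))"
  proof -
    have "(\<integral>\<^sup>+x. ennreal \<bar>h x\<bar> ^ 2 \<partial>M) = ennreal (\<integral>x. (h x)\<^sup>2 \<partial>M)"
      if "integrable M (\<lambda>x. (h x)\<^sup>2)" for h :: "'a \<Rightarrow> real"
      using nn_integral_eq_integral[OF that] by (simp add: ennreal_power)
    then show ?thesis using f2 g2 by (simp add: ennreal_mult)
  qed
  finally have "(\<integral>x. \<bar>f x * g x\<bar> \<partial>M)\<^sup>2 \<le> (\<integral>x. (f x)\<^sup>2 \<partial>M) * (\<integral>x. (g x)\<^sup>2 \<partial>M)"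
    by (simp add: ennreal_le_iff)
  then show "(\<integral>x. \<bar>f x * g x\<bar> \<partial>M) \<le> sqrt (\<integral>x. (f x)\<^sup>2 \<partial>M) * sqrt (\<integral>x. (g x)\<^sup>2 \<partial>M)"
    unfolding real_sqrt_mult[symmetric] by (rule real_le_rsqrt)
qed

lemma integral_mult_le_sqrt:
  fixes f g :: "'a \<Rightarrow> real"
  assumes "f \<in> borel_measurable M" "g \<in> borel_measurable M"
    and "integrable M (\<lambda>x. (f x)\<^sup>2)" "integrable M (\<lambda>x. (g x)\<^sup>2)"
  shows "(\<integral>x. f x * g x \<partial>M) \<le> sqrt (\<integral>x. (f x)\<^sup>2 \<partial>M) * sqrt (\<integral>x. (g x)\<^sup>2 \<partial>M)"
proof -
  have "(\<integral>x. f x * g x \<partial>M) \<le> (\<integral>x. \<bar>f x * g x\<bar> \<partial>M)"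
    using integrable_mult_if_square_integrable[OF assms] by (intro integral_mono) auto
  then show ?thesis using integral_abs_mult_le_sqrt(2)[OF assms] by linarith
qed

lemma square_integrable_cmod:
  "square_integrable M f \<Longrightarrow> (\<lambda>x. cmod (f x)) \<in> borel_measurable M \<and> integrable M (\<lambda>x. (cmod (f x))\<^sup>2)"
  unfolding square_integrable_def by auto

lemma square_integrable_add:
  assumes "square_integrable M f" "square_integrable M g"
  shows "square_integrable M (\<lambda>x. f x + g x)"
  unfolding square_integrable_def
proof
  show m: "(\<lambda>x. f x + g x) \<in> borel_measurable M"
    using assms unfolding square_integrable_def by auto
  show "integrable M (\<lambda>x. (cmod (f x + g x))\<^sup>2)"
  proof (rule Bochner_Integration.integrable_bound[of _ "\<lambda>x. 2 * (cmod (f x))\<^sup>2 + 2 * (cmod (g x))\<^sup>2"])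
    have "(cmod (a + b))\<^sup>2 \<le> 2 * (cmod a)\<^sup>2 + 2 * (cmod b)\<^sup>2" for a b :: complex
    proof -
      have "(cmod (a + b))\<^sup>2 \<le> (cmod a + cmod b)\<^sup>2"
        by (simp add: norm_triangle_ineq power_mono)
      then show ?thesis
        using sum_squares_bound[of "cmod a" "cmod b"] by (simp add: power2_sum)
    qed
    then show "AE x in M. norm ((cmod (f x + g x))\<^sup>2) \<le> norm (2 * (cmod (f x))\<^sup>2 + 2 * (cmod (g x))\<^sup>2)"
      by (intro AE_I2) simp
  qed (use assms m in \<open>auto simp: square_integrable_def\<close>)
qed

lemma square_integrable_cmult:
  "square_integrable M f \<Longrightarrow> square_integrable M (\<lambda>x. c * f x)"
  unfolding square_integrable_def by (auto simp: norm_mult power_mult_distrib)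

lemma square_integrable_sum:
  "(\<And>i. i \<in> I \<Longrightarrow> square_integrable M (f i)) \<Longrightarrow> square_integrable M (\<lambda>x. \<Sum>i\<in>I. f i x)"
proof (induction I rule: infinite_finite_induct)
  case (insert a A)
  then show ?case using square_integrable_add[of M "f a" "\<lambda>x. \<Sum>i\<in>A. f i x"] by simp
qed (simp_all add: square_integrable_def)

lemma integrable_mult_if_square_integrable_complex:
  assumes "square_integrable M f" "square_integrable M g"
  shows "integrable M (\<lambda>x. f x * g x)"
proof (rule Bochner_Integration.integrable_bound)
  show "integrable M (\<lambda>x. cmod (f x) * cmod (g x))"
    using assms by (intro integrable_mult_if_square_integrable) (auto dest: square_integrable_cmod)
  show "(\<lambda>x. f x * g x) \<in> borel_measurable M"
    using assms unfolding square_integrable_def by auto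
qed (auto simp: norm_mult)

lemma integrable_Re_mult_cnj:
  assumes "square_integrable M f" "square_integrable M g"
  shows "integrable M (\<lambda>x. Re (f x * cnj (g x)))"
proof (rule Bochner_Integration.integrable_bound)
  show "integrable M (\<lambda>x. cmod (f x) * cmod (g x))"
    using assms by (intro integrable_mult_if_square_integrable) (auto dest: square_integrable_cmod)
  show "(\<lambda>x. Re (f x * cnj (g x))) \<in> borel_measurable M"
    using assms unfolding square_integrable_def by auto
  show "AE x in M. norm (Re (f x * cnj (g x))) \<le> norm (cmod (f x) * cmod (g x))"
  proof (intro AE_I2)
    fix x
    have "\<bar>Re (f x * cnj (g x))\<bar> \<le> cmod (f x * cnj (g x))" by (rule abs_Re_le_cmod)
    then show "norm (Re (f x * cnj (g x))) \<le> norm (cmod (f x) * cmod (g x))" by (simp add: norm_mult)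
  qed
qed

lemma norm_integral_mult_le_sqrt_second_moment:
  assumes "square_integrable M f" "square_integrable M g"
  shows "cmod (\<integral>x. f x * g x \<partial>M) \<le> sqrt (second_moment M f) * sqrt (second_moment M g)"
proof -
  have "cmod (\<integral>x. f x * g x \<partial>M) \<le> (\<integral>x. \<bar>cmod (f x) * cmod (g x)\<bar> \<partial>M)"
    using integral_norm_bound[of M "\<lambda>x. f x * g x"] by (simp add: norm_mult)
  also have "\<dots> \<le> sqrt (second_moment M f) * sqrt (second_moment M g)"
    using assms unfolding second_moment_def
    by (intro integral_abs_mult_le_sqrt(2)) (auto dest: square_integrable_cmod)
  finally show ?thesis .
qed

lemma square_integrable_Re_Im:
  assumes "square_integrable M W"
  shows integrable_Re_square: "integrable M (\<lambda>x. (Re (W x))\<^sup>2)"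
    and integrable_Im_square: "integrable M (\<lambda>x. (Im (W x))\<^sup>2)"
    and second_moment_Re_Im: "second_moment M W = (\<integral>x. (Re (W x))\<^sup>2 \<partial>M) + (\<integral>x. (Im (W x))\<^sup>2 \<partial>M)"
proof -
  have W: "W \<in> borel_measurable M" "integrable M (\<lambda>x. (cmod (W x))\<^sup>2)"
    using assms unfolding square_integrable_def by auto
  show re: "integrable M (\<lambda>x. (Re (W x))\<^sup>2)"
    by (rule Bochner_Integration.integrable_bound[OF W(2)]) (use W(1) in \<open>auto simp: cmod_power2\<close>)
  show im: "integrable M (\<lambda>x. (Im (W x))\<^sup>2)"
    by (rule Bochner_Integration.integrable_bound[OF W(2)]) (use W(1) in \<open>auto simp: cmod_power2\<close>)
  show "second_moment M W = (\<integral>x. (Re (W x))\<^sup>2 \<partial>M) + (\<integral>x. (Im (W x))\<^sup>2 \<partial>M)"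
    unfolding second_moment_def cmod_power2 using re im by simp
qed

lemma integral_Re_Im:
  assumes "integrable M W"
  shows "(\<integral>x. Re (W x) \<partial>M) = Re (\<integral>x. W x \<partial>M)" "(\<integral>x. Im (W x) \<partial>M) = Im (\<integral>x. W x \<partial>M)"
  using integral_bounded_linear[OF bounded_linear_Re assms]
    integral_bounded_linear[OF bounded_linear_Im assms] by simp_all

lemma second_moment_nonneg: "0 \<le> second_moment M f"
  unfolding second_moment_def by simp

lemma second_moment_cmult: "second_moment M (\<lambda>x. c * f x) = (cmod c)\<^sup>2 * second_moment M f"
  unfolding second_moment_def by (simp add: norm_mult power_mult_distrib)

lemma second_moment_add:
  assumes "square_integrable M f" "square_integrable M g"
  shows "second_moment M (\<lambda>x. f x + g x)
    = second_moment M f + second_moment M g + 2 * (\<integral>x. Re (f x * cnj (g x)) \<partial>M)"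
proof -
  have "(cmod (a + b))\<^sup>2 = (cmod a)\<^sup>2 + (cmod b)\<^sup>2 + 2 * Re (a * cnj b)" for a b
    unfolding cmod_power2 by (simp add: power2_eq_square algebra_simps)
  then show ?thesis
    using assms integrable_Re_mult_cnj[OF assms] unfolding second_moment_def square_integrable_def
    by (simp del: times_complex.sel) \<comment> \<open>keep \<open>Re (f x * cnj (g x))\<close> intact to match its integrability\<close>
qed

lemma second_moment_diff:
  assumes "square_integrable M f" "square_integrable M g"
  shows "second_moment M (\<lambda>x. f x - g x)
    = second_moment M f + second_moment M g - 2 * (\<integral>x. Re (f x * cnj (g x)) \<partial>M)"
proof -
  have "(cmod (a - b))\<^sup>2 = (cmod a)\<^sup>2 + (cmod b)\<^sup>2 - 2 * Re (a * cnj b)" for a b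
    unfolding cmod_power2 by (simp add: power2_eq_square algebra_simps)
  then show ?thesis
    using assms integrable_Re_mult_cnj[OF assms] unfolding second_moment_def square_integrable_def
    by (simp del: times_complex.sel)
qed

lemma second_moment_sum_le_card:
  assumes "\<And>i. i \<in> I \<Longrightarrow> square_integrable M (f i)"
  shows "second_moment M (\<lambda>x. \<Sum>i\<in>I. f i x) \<le> card I * (\<Sum>i\<in>I. second_moment M (f i))"
proof -
  have "(cmod (\<Sum>i\<in>I. a i))\<^sup>2 \<le> card I * (\<Sum>i\<in>I. (cmod (a i))\<^sup>2)" for a :: "_ \<Rightarrow> complex"
  proof -
    have "(cmod (\<Sum>i\<in>I. a i))\<^sup>2 \<le> (\<Sum>i\<in>I. 1 * cmod (a i))\<^sup>2"
      by (simp add: norm_sum power_mono)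
    also have "\<dots> \<le> (\<Sum>i\<in>I. 1\<^sup>2) * (\<Sum>i\<in>I. (cmod (a i))\<^sup>2)"
      by (rule Cauchy_Schwarz_ineq_sum)
    finally show ?thesis by simp
  qed
  then have "second_moment M (\<lambda>x. \<Sum>i\<in>I. f i x) \<le> (\<integral>x. card I * (\<Sum>i\<in>I. (cmod (f i x))\<^sup>2) \<partial>M)"
    unfolding second_moment_def using square_integrable_sum[of I M f] assms
    by (intro integral_mono) (auto simp: square_integrable_def)
  also have "\<dots> = card I * (\<Sum>i\<in>I. second_moment M (f i))"
    using assms unfolding square_integrable_def second_moment_def by simp
  finally show ?thesis .
qed

lemma second_moment_add_le_three_diff:
  assumes f: "square_integrable M f" and g: "square_integrable M g"
    and corr: "(\<integral>x. Re (f x * cnj (g x)) \<partial>M) \<le> 1/2 * sqrt (second_moment M f) * sqrt (second_moment M g)"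
  shows "second_moment M (\<lambda>x. f x + g x) \<le> 3 * second_moment M (\<lambda>x. f x - g x)"
proof -
  have "2 * (sqrt (second_moment M f) * sqrt (second_moment M g))
      \<le> second_moment M f + second_moment M g"
    using sum_squares_bound[of "sqrt (second_moment M f)" "sqrt (second_moment M g)"]
    by (simp add: second_moment_nonneg)
  moreover have "2 * (\<integral>x. Re (f x * cnj (g x)) \<partial>M) \<le> sqrt (second_moment M f) * sqrt (second_moment M g)"
    using corr by simp
  ultimately show ?thesis
    unfolding second_moment_add[OF f g] second_moment_diff[OF f g] by argo
qed

lemma sum_second_moment_signed_sums:
  assumes "finite T" "\<And>t. t \<in> T \<Longrightarrow> square_integrable M (W t)"
  shows "(\<Sum>P\<in>Pow T. second_moment M (\<lambda>x. \<Sum>t\<in>T. if t \<in> P then W t x else - W t x))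
         = 2 ^ card T * (\<Sum>t\<in>T. second_moment M (W t))"
  using assms
proof (induction T rule: finite_induct)
  case empty
  then show ?case by (simp add: second_moment_def)
next
  case (insert a T)
  define D where "D P = (\<lambda>x. \<Sum>t\<in>T. if t \<in> P then W t x else - W t x)" for P
  have D: "square_integrable M (D P)" for P
    unfolding D_def
  proof (intro square_integrable_sum)
    fix t assume "t \<in> T"
    then show "square_integrable M (\<lambda>x. if t \<in> P then W t x else - W t x)"
      using insert.prems square_integrable_cmult[of M "W t" "-1"] by (cases "t \<in> P") auto
  qed
  have W: "square_integrable M (W a)" using insert by auto
  have without_a: "(\<lambda>x. \<Sum>t\<in>insert a T. if t \<in> P then W t x else - W t x) = (\<lambda>x. D P x - W a x)"
    if "P \<in> Pow T" for P
  proof -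
    have "a \<notin> P" using that insert.hyps by auto
    then show ?thesis using insert.hyps by (simp add: D_def)
  qed
  have with_a: "(\<lambda>x. \<Sum>t\<in>insert a T. if t \<in> insert a P then W t x else - W t x) = (\<lambda>x. D P x + W a x)"
    if "P \<in> Pow T" for P
  proof -
    have "(\<Sum>t\<in>T. if t = a \<or> t \<in> P then W t x else - W t x) = D P x" for x
      using insert.hyps unfolding D_def by (intro sum.cong) auto
    then show ?thesis using insert.hyps by (simp add: add.commute)
  qed
  have "inj_on (insert a) (Pow T)" "Pow T \<inter> insert a ` Pow T = {}"
    using insert.hyps by (auto intro!: inj_onI)
  then have "(\<Sum>P\<in>Pow (insert a T). second_moment M (\<lambda>x. \<Sum>t\<in>insert a T. if t \<in> P then W t x else - W t x))
     = (\<Sum>P\<in>Pow T. second_moment M (\<lambda>x. \<Sum>t\<in>insert a T. if t \<in> P then W t x else - W t x))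
       + (\<Sum>P\<in>Pow T. second_moment M (\<lambda>x. \<Sum>t\<in>insert a T. if t \<in> insert a P then W t x else - W t x))"
    unfolding Pow_insert using insert.hyps by (simp add: sum.union_disjoint sum.reindex)
  also have "\<dots> = (\<Sum>P\<in>Pow T. second_moment M (\<lambda>x. D P x - W a x) + second_moment M (\<lambda>x. D P x + W a x))"
    unfolding sum.distrib
    by (intro arg_cong2[where f="(+)"] sum.cong refl) (simp_all only: without_a with_a)
  also have "\<dots> = (\<Sum>P\<in>Pow T. 2 * second_moment M (D P) + 2 * second_moment M (W a))"
    by (intro sum.cong refl) (simp add: second_moment_add[OF D W] second_moment_diff[OF D W])
  also have "\<dots> = 2 * (\<Sum>P\<in>Pow T. second_moment M (D P)) + 2 * 2 ^ card T * second_moment M (W a)"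
    using insert.hyps by (simp add: sum.distrib sum_distrib_left card_Pow)
  also have "\<dots> = 2 ^ card (insert a T) * (\<Sum>t\<in>insert a T. second_moment M (W t))"
    using insert by (simp add: D_def algebra_simps)
  finally show ?case .
qed

lemma second_moment_sum_le_three:
  assumes T: "finite T" and W: "\<And>t. t \<in> T \<Longrightarrow> square_integrable M (W t)"
    and corr: "\<And>P. P \<subseteq> T \<Longrightarrow> (\<integral>x. Re ((\<Sum>t\<in>P. W t x) * cnj (\<Sum>t\<in>T-P. W t x)) \<partial>M)
      \<le> 1/2 * sqrt (second_moment M (\<lambda>x. \<Sum>t\<in>P. W t x)) * sqrt (second_moment M (\<lambda>x. \<Sum>t\<in>T-P. W t x))"
  shows "second_moment M (\<lambda>x. \<Sum>t\<in>T. W t x) \<le> 3 * (\<Sum>t\<in>T. second_moment M (W t))"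
proof -
  have "second_moment M (\<lambda>x. \<Sum>t\<in>T. W t x)
      \<le> 3 * second_moment M (\<lambda>x. \<Sum>t\<in>T. if t \<in> P then W t x else - W t x)"
    if P: "P \<subseteq> T" for P
  proof -
    have "(\<Sum>t\<in>T. W t x) = (\<Sum>t\<in>P. W t x) + (\<Sum>t\<in>T-P. W t x)" for x
      using sum.subset_diff[OF P T] by (simp add: add.commute)
    moreover have "(\<Sum>t\<in>T. if t \<in> P then W t x else - W t x) = (\<Sum>t\<in>P. W t x) - (\<Sum>t\<in>T-P. W t x)" for x
      using sum.If_cases[OF T, of "\<lambda>t. t \<in> P" "\<lambda>t. W t x" "\<lambda>t. - W t x"] P
      by (simp add: Int_absorb1 Diff_eq[symmetric] sum_negf)
    moreover have "square_integrable M (\<lambda>x. \<Sum>t\<in>P. W t x)" "square_integrable M (\<lambda>x. \<Sum>t\<in>T-P. W t x)"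
      using P W by (auto intro: square_integrable_sum)
    ultimately show ?thesis
      using second_moment_add_le_three_diff[OF _ _ corr[OF P]] by presburger
  qed
  then have "2 ^ card T * second_moment M (\<lambda>x. \<Sum>t\<in>T. W t x)
      \<le> 3 * (\<Sum>P\<in>Pow T. second_moment M (\<lambda>x. \<Sum>t\<in>T. if t \<in> P then W t x else - W t x))"
    using sum_mono[of "Pow T" "\<lambda>_. second_moment M (\<lambda>x. \<Sum>t\<in>T. W t x)"] T
    by (simp add: card_Pow sum_distrib_left)
  also have "\<dots> = 2 ^ card T * (3 * (\<Sum>t\<in>T. second_moment M (W t)))"
    by (simp add: sum_second_moment_signed_sums[OF T W])
  finally show ?thesis by simp
qed

lemma norm_sub_one_mult_integral_le:
  assumes "square_integrable M f" "square_integrable M g"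
    and "square_integrable M f'" "square_integrable M g'"
    and "(\<integral>x. (f x + f' x) * (g x + g' x) \<partial>M) = c * (\<integral>x. f x * g x \<partial>M)"
  shows "cmod (c - 1) * cmod (\<integral>x. f x * g x \<partial>M)
    \<le> sqrt (second_moment M f') * sqrt (second_moment M (\<lambda>x. g x + g' x))
       + sqrt (second_moment M f) * sqrt (second_moment M g')"
proof -
  have "(c - 1) * (\<integral>x. f x * g x \<partial>M)
      = (\<integral>x. (f x + f' x) * (g x + g' x) \<partial>M) - (\<integral>x. f x * g x \<partial>M)"
    using assms(5) by (simp add: algebra_simps)
  also have "\<dots> = (\<integral>x. f' x * (g x + g' x) \<partial>M) + (\<integral>x. f x * g' x \<partial>M)"
    using assms(1-4) by (simp add: integrable_mult_if_square_integrable_complex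
        square_integrable_add algebra_simps flip: Bochner_Integration.integral_diff)
  finally have "cmod (c - 1) * cmod (\<integral>x. f x * g x \<partial>M)
      \<le> cmod (\<integral>x. f' x * (g x + g' x) \<partial>M) + cmod (\<integral>x. f x * g' x \<partial>M)"
    by (metis norm_mult norm_triangle_ineq)
  also have "\<dots> \<le> sqrt (second_moment M f') * sqrt (second_moment M (\<lambda>x. g x + g' x))
       + sqrt (second_moment M f) * sqrt (second_moment M g')"
    using assms(1-4)
    by (intro add_mono norm_integral_mult_le_sqrt_second_moment square_integrable_add)
  finally show ?thesis .
qed

lemma sum_mult_le_sqrt_sum_squares:
  fixes a1 a2 b1 b2 :: real
  shows "a1 * b1 + a2 * b2 \<le> sqrt (a1\<^sup>2 + a2\<^sup>2) * sqrt (b1\<^sup>2 + b2\<^sup>2)"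
  using Cauchy_Schwarz_ineq2[of "Complex a1 a2" "Complex b1 b2"]
  by (simp add: inner_complex_def complex_norm)

lemma sqrt_mult_le_of_mult_le:
  fixes s w c V :: real
  assumes "s * w \<le> c * V" "0 < w" "0 \<le> c" "0 \<le> V"
  shows "sqrt (s * V) \<le> V * sqrt c / sqrt w"
proof (rule real_le_lsqrt)
  show "0 \<le> V * sqrt c / sqrt w"
    using assms by simp
  have "s * V \<le> c * V / w * V"
    using assms by (intro mult_right_mono) (simp_all add: field_simps)
  also have "\<dots> = (V * sqrt c / sqrt w)\<^sup>2"
    using assms by (simp add: power_divide power_mult_distrib power2_eq_square)
  finally show "s * V \<le> (V * sqrt c / sqrt w)\<^sup>2" .
qed

lemma tendsto_zero_if_mult_le:
  fixes a :: "'i \<Rightarrow> 'b::real_normed_vector"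
  assumes g: "(g \<longlongrightarrow> \<delta>) F" "0 < \<delta>" and b: "(b \<longlongrightarrow> 0) F"
    and le: "\<forall>\<^sub>F n in F. g n * norm (a n) \<le> b n"
  shows "(a \<longlongrightarrow> 0) F"
proof (rule Lim_null_comparison)
  show "((\<lambda>n. b n / (\<delta> / 2)) \<longlongrightarrow> 0) F"
    using b by (rule tendsto_divide_zero)
  have "\<forall>\<^sub>F n in F. \<delta> / 2 < g n"
    using g by (intro order_tendstoD(1)) auto
  then show "\<forall>\<^sub>F n in F. norm (a n) \<le> b n / (\<delta> / 2)"
    using le
  proof eventually_elim
    case (elim n)
    have "norm (a n) * (\<delta> / 2) \<le> norm (a n) * g n"
      using elim by (intro mult_left_mono) auto
    also have "\<dots> \<le> b n"
      using elim by (simp add: mult.commute)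
    finally have "norm (a n) * (\<delta> / 2) \<le> b n" .
    then show ?case
      using \<open>0 < \<delta>\<close> by (subst pos_le_divide_eq) auto
  qed
qed

lemma sum_eq_sum_add_sum_sym_diff:
  fixes c y :: "'i \<Rightarrow> 'b::comm_ring"
  assumes "finite A" "finite B"
  shows "(\<Sum>k\<in>A. c k * y k)
    = (\<Sum>k\<in>B. c k * y k) + (\<Sum>k\<in>sym_diff A B. (if k \<in> A then c k else - c k) * y k)"
proof -
  have "(\<Sum>k\<in>A. c k * y k) = (\<Sum>k\<in>A-B. c k * y k) + (\<Sum>k\<in>A\<inter>B. c k * y k)"
    "(\<Sum>k\<in>B. c k * y k) = (\<Sum>k\<in>B-A. c k * y k) + (\<Sum>k\<in>A\<inter>B. c k * y k)"
    using assms by (metis add.commute sum.Int_Diff Int_commute)+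
  moreover have "(\<Sum>k\<in>sym_diff A B. (if k \<in> A then c k else - c k) * y k)
      = (\<Sum>k\<in>A-B. c k * y k) - (\<Sum>k\<in>B-A. c k * y k)"
    using assms by (subst sum.union_disjoint) (auto simp: sum_negf)
  ultimately show ?thesis by simp
qed

lemma exp_neg_ii_double_neq_1:
  fixes x :: real
  assumes "- pi < x" "x \<le> pi" "x \<notin> {0, pi}"
  shows "exp (- \<i> * of_real (x + x)) \<noteq> 1"
proof
  assume "exp (- \<i> * of_real (x + x)) = 1"
  then obtain n :: int where "- (x + x) = of_int (2 * n) * pi"
    unfolding exp_eq_1 by auto
  then have x: "x = - of_int n * pi" by (simp add: algebra_simps)
  have "(- 1) * pi < (- real_of_int n) * pi" "(- real_of_int n) * pi \<le> 1 * pi"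
    using assms(1,2) x by simp_all
  then have "- 1 < - real_of_int n" "- real_of_int n \<le> 1"
    by (metis mult_right_less_imp_less pi_ge_zero, metis mult_right_le_imp_le pi_gt_zero)
  then have "n = 0 \<or> n = -1" by linarith
  then show False using assms(3) x by auto
qed

lemma vec_Pi_eq_image_PiE: "{w::'b^'n. \<forall>j. w$j \<in> I j} = vec_lambda ` PiE UNIV I"
proof (intro equalityI subsetI)
  fix w :: "'b^'n" assume "w \<in> {w. \<forall>j. w$j \<in> I j}"
  then have "(\<lambda>j. w$j) \<in> PiE UNIV I" by auto
  then show "w \<in> vec_lambda ` PiE UNIV I" by (metis image_eqI vec_lambda_eta)
qed auto

lemma card_vec_Pi: "card {w::'b^'n::finite. \<forall>j. w$j \<in> I j} = (\<Prod>j\<in>UNIV. card (I j))"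
proof -
  have "inj_on vec_lambda (PiE UNIV I)" by (auto intro: inj_onI simp: vec_lambda_inject)
  then show ?thesis unfolding vec_Pi_eq_image_PiE by (simp add: card_image card_PiE)
qed

lemma finite_vec_Pi: "(\<And>j. finite (I j)) \<Longrightarrow> finite {w::'b^'n::finite. \<forall>j. w$j \<in> I j}"
  unfolding vec_Pi_eq_image_PiE by (intro finite_imageI finite_PiE) auto

lemma box_eq_vec_Pi: "box v = {w. \<forall>j. w$j \<in> {1..int (v$j)}}"
  unfolding box_def by auto

lemma finite_box: "finite (box v)"
  unfolding box_eq_vec_Pi by (rule finite_vec_Pi) simp

lemma card_box: "card (box v) = vol v"
  unfolding box_eq_vec_Pi card_vec_Pi vol_def by simp

lemma card_box_slice_le: "card {k\<in>box v. k$u = a} * v$u \<le> vol v"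
proof -
  have "card {k\<in>box v. k$u = a} \<le> card {w. \<forall>j. w$j \<in> (if j = u then {a} else {1..int (v$j)})}"
    by (intro card_mono finite_vec_Pi) (auto simp: box_def)
  also have "\<dots> = (\<Prod>j\<in>UNIV. if j = u then 1 else v$j)"
    unfolding card_vec_Pi by (intro prod.cong) auto
  also have "\<dots> = (\<Prod>j\<in>UNIV - {u}. v$j)"
    by (subst prod.remove[of _ u]) (auto intro!: prod.cong)
  finally show ?thesis
    unfolding vol_def by (simp add: prod.remove[of _ u] mult.commute)
qed

lemma box_diff_shift_subset: "box v - (\<lambda>k. k + axis u 1) ` box v \<subseteq> {k\<in>box v. k$u = 1}"
proof safe
  fix k assume k: "k \<in> box v" "k \<notin> (\<lambda>k. k + axis u 1) ` box v"
  show "k$u = 1"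
  proof (rule ccontr)
    assume "k$u \<noteq> 1"
    have k_bounds: "1 \<le> k$j \<and> k$j \<le> int (v$j)" for j
      using k(1) unfolding box_def by auto
    have "1 \<le> (k - axis u 1)$j \<and> (k - axis u 1)$j \<le> int (v$j)" for j
      using k_bounds[of j] \<open>k$u \<noteq> 1\<close> by (cases "j = u") (auto simp: axis_def)
    then have "k - axis u 1 \<in> box v"
      unfolding box_def by blast
    then show False
      using k(2) by (metis diff_add_cancel image_eqI)
  qed
qed

lemma shift_box_diff_subset:
  "(\<lambda>k. k + axis u 1) ` box v - box v \<subseteq> (\<lambda>k. k + axis u 1) ` {k\<in>box v. k$u = int (v$u)}"
proof safe
  fix k assume k: "k \<in> box v" "k + axis u 1 \<notin> box v"
  have k_bounds: "1 \<le> k$j \<and> k$j \<le> int (v$j)" for j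
    using k(1) unfolding box_def by auto
  have "k$u = int (v$u)"
  proof (rule ccontr)
    assume "k$u \<noteq> int (v$u)"
    then have "1 \<le> (k + axis u 1)$j \<and> (k + axis u 1)$j \<le> int (v$j)" for j
      using k_bounds[of j] by (cases "j = u") (auto simp: axis_def)
    then show False
      using k(2) unfolding box_def by blast
  qed
  then show "k + axis u 1 \<in> (\<lambda>k. k + axis u 1) ` {k\<in>box v. k$u = int (v$u)}"
    using k(1) by blast
qed

lemma card_box_shift_sym_diff:
  "card (sym_diff ((\<lambda>k. k + axis u 1) ` box v) (box v)) * v$u \<le> 2 * vol v"
proof -
  have "card (sym_diff ((\<lambda>k. k + axis u 1) ` box v) (box v))
      \<le> card ((\<lambda>k. k + axis u 1) ` {k\<in>box v. k$u = int (v$u)}) + card {k\<in>box v. k$u = 1}"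
    using finite_box[of v] box_diff_shift_subset[of v u] shift_box_diff_subset[of u v]
    by (intro order_trans[OF card_Un_le] add_mono card_mono) auto
  also have "\<dots> \<le> card {k\<in>box v. k$u = int (v$u)} + card {k\<in>box v. k$u = 1}"
    by (intro add_right_mono card_image_le) (simp add: finite_box)
  finally have "card (sym_diff ((\<lambda>k. k + axis u 1) ` box v) (box v)) * v$u
      \<le> (card {k\<in>box v. k$u = int (v$u)} + card {k\<in>box v. k$u = 1}) * v$u"
    by (rule mult_le_mono1)
  also have "\<dots> \<le> 2 * vol v"
    using card_box_slice_le[of v u 1] card_box_slice_le[of v u "int (v$u)"]
    unfolding add_mult_distrib by linarith
  finally show ?thesis .
qed

definition phase :: "real^'d \<Rightarrow> int^'d \<Rightarrow> complex" where
  "phase \<mu> k = exp (- \<i> * of_real (kdot k \<mu>))"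

lemma partial_sum_eq_lin_comb: "partial_sum X v \<mu> x = (\<Sum>k\<in>box v. phase \<mu> k * X k x)"
  unfolding partial_sum_def phase_def ..

lemma norm_phase: "cmod (phase \<mu> k) = 1"
  unfolding phase_def by (simp add: norm_exp_eq_Re)

lemma phase_add_axis: "phase \<mu> (k + axis u 1) = exp (- \<i> * of_real (\<mu>$u)) * phase \<mu> k"
proof -
  have "kdot (k + axis u 1) \<mu> = (\<Sum>j\<in>UNIV. real_of_int (k$j) * \<mu>$j + (if j = u then \<mu>$j else 0))"
    unfolding kdot_def axis_def by (intro sum.cong) (auto simp: algebra_simps)
  then have "kdot (k + axis u 1) \<mu> = kdot k \<mu> + \<mu>$u"
    by (simp add: sum.distrib kdot_def)
  then show ?thesis
    unfolding phase_def by (simp add: algebra_simps flip: exp_add)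
qed

context prob_space
begin

lemma integrable_if_square_integrable: "square_integrable M f \<Longrightarrow> integrable M f"
  unfolding square_integrable_def
  by (rule square_integrable_imp_integrable)
     (auto intro: Bochner_Integration.integrable_bound simp: norm_power)

lemma corr_le_1:
  fixes f g :: "'a \<Rightarrow> real"
  assumes [measurable]: "f \<in> borel_measurable M" "g \<in> borel_measurable M"
    and f2: "integrable M (\<lambda>x. (f x)\<^sup>2)" and g2: "integrable M (\<lambda>x. (g x)\<^sup>2)"
  shows "corr M f g \<le> 1"
proof -
  define q where "q = expectation (\<lambda>x. (f x - expectation f) * (g x - expectation g))"
  define d where "d = sqrt (variance f) * sqrt (variance g)"
  have f: "integrable M f" and g: "integrable M g"
    using f2 g2 by (auto intro: square_integrable_imp_integrable)
  have "q = expectation (\<lambda>x. f x * g x) - expectation f * expectation g"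
    unfolding q_def using f g integrable_mult_if_square_integrable[of f M g] f2 g2
    by (simp add: algebra_simps prob_space)
  then have "corr M f g = q / d"
    unfolding corr_def d_def variance_eq[OF f f2] variance_eq[OF g g2] real_sqrt_mult by simp
  moreover have "q \<le> d"
    unfolding q_def d_def using f g f2 g2 by (intro integral_mult_le_sqrt) (auto simp: power2_diff)
  moreover have "0 \<le> d"
    unfolding d_def by (intro mult_nonneg_nonneg real_sqrt_ge_zero integral_nonneg) auto
  ultimately show ?thesis
    by (cases "d = 0") (simp_all add: divide_le_eq_1)
qed

lemma corr_le_max_corr:
  assumes A: "subalgebra M A" and B: "subalgebra M B"
    and "f \<in> borel_measurable A" "g \<in> borel_measurable B"
    and "integrable M (\<lambda>x. (f x)\<^sup>2)" "integrable M (\<lambda>x. (g x)\<^sup>2)"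
  shows "corr M f g \<le> max_corr M A B"
  unfolding max_corr_def
proof (rule cSup_upper)
  show "bdd_above {corr M f g | f g.
      f \<in> borel_measurable A \<and> integrable M (\<lambda>x. (f x)\<^sup>2) \<and>
      g \<in> borel_measurable B \<and> integrable M (\<lambda>x. (g x)\<^sup>2)}"
    by (rule bdd_aboveI[of _ 1])
       (auto intro!: corr_le_1 dest: measurable_from_subalg[OF A] measurable_from_subalg[OF B])
qed (use assms in blast)

lemma max_corr_le_1:
  assumes A: "subalgebra M A" and B: "subalgebra M B"
  shows "max_corr M A B \<le> 1"
  unfolding max_corr_def
proof (rule cSup_least)
  show "{corr M f g | f g.
      f \<in> borel_measurable A \<and> integrable M (\<lambda>x. (f x)\<^sup>2) \<and>
      g \<in> borel_measurable B \<and> integrable M (\<lambda>x. (g x)\<^sup>2)} \<noteq> {}"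
    by (auto intro!: exI[of _ "\<lambda>x. 0::real"])
qed (auto intro!: corr_le_1 dest: measurable_from_subalg[OF A] measurable_from_subalg[OF B])

end

definition separated :: "nat \<Rightarrow> 'd \<Rightarrow> (int^'d) set \<Rightarrow> (int^'d) set \<Rightarrow> bool" where
  "separated n u S T \<longleftrightarrow> (\<forall>k\<in>S. \<forall>l\<in>T. int n \<le> \<bar>k$u - l$u\<bar>)"

locale centered_random_field = prob_space +
  fixes X :: "int^'d \<Rightarrow> 'a \<Rightarrow> complex"
  assumes measurable_X [measurable]: "\<And>k. X k \<in> borel_measurable M"
    and integrable_square_X: "\<And>k. integrable M (\<lambda>\<omega>. (cmod (X k \<omega>))\<^sup>2)"
    and centered: "\<And>k. (\<integral>\<omega>. X k \<omega> \<partial>M) = 0"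
begin

lemma subalgebra_sigma_gen: "subalgebra M (sigma_gen M X S)"
proof -
  define G where "G = (\<Union>k\<in>S. {X k -` A \<inter> space M | A. A \<in> sets borel})"
  have G: "G \<subseteq> sets M"
    unfolding G_def by (auto intro: measurable_sets)
  then have "G \<subseteq> Pow (space M)"
    using sets.sets_into_space by auto
  then show ?thesis
    unfolding subalgebra_def sigma_gen_def G_def[symmetric]
    using sets.sigma_sets_subset[OF G] by (simp add: sets_measure_of space_measure_of_conv)
qed

lemma measurable_sigma_gen: "k \<in> S \<Longrightarrow> X k \<in> borel_measurable (sigma_gen M X S)"
proof (rule measurableI)
  fix A :: "complex set" assume "k \<in> S" "A \<in> sets borel"
  then have "X k -` A \<inter> space M \<in> (\<Union>k\<in>S. {X k -` A \<inter> space M | A. A \<in> sets borel})"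
    by blast
  then show "X k -` A \<inter> space (sigma_gen M X S) \<in> sets (sigma_gen M X S)"
    using subalgebra_sigma_gen[of S] unfolding subalgebra_def sigma_gen_def
    by (auto simp: sets_measure_of_conv)
qed simp

lemma max_corr_le_rho':
  assumes "finite S" "S \<noteq> {}" "finite T" "T \<noteq> {}" "separated n u S T"
  shows "max_corr M (sigma_gen M X S) (sigma_gen M X T) \<le> rho' M X n"
  unfolding rho'_def
proof (rule cSup_upper)
  show "bdd_above {max_corr M (sigma_gen M X S) (sigma_gen M X T) | S T.
      finite S \<and> S \<noteq> {} \<and> finite T \<and> T \<noteq> {} \<and> (\<exists>u. \<forall>k\<in>S. \<forall>l\<in>T. \<bar>k$u - l$u\<bar> \<ge> int n)}"
    by (rule bdd_aboveI[of _ 1]) (auto intro!: max_corr_le_1 subalgebra_sigma_gen)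
qed (use assms in \<open>unfold separated_def; blast\<close>)

lemma integral_mult_le_rho':
  fixes f g :: "'a \<Rightarrow> real"
  assumes "finite S" "S \<noteq> {}" "finite T" "T \<noteq> {}" "separated n u S T"
    and f: "f \<in> borel_measurable (sigma_gen M X S)" and g: "g \<in> borel_measurable (sigma_gen M X T)"
    and f2: "integrable M (\<lambda>x. (f x)\<^sup>2)" and g2: "integrable M (\<lambda>x. (g x)\<^sup>2)"
    and f0: "expectation f = 0" and g0: "expectation g = 0" and r: "rho' M X n \<le> r"
  shows "expectation (\<lambda>x. f x * g x)
    \<le> r * (sqrt (expectation (\<lambda>x. (f x)\<^sup>2)) * sqrt (expectation (\<lambda>x. (g x)\<^sup>2)))"
proof -
  define d where "d = sqrt (expectation (\<lambda>x. (f x)\<^sup>2)) * sqrt (expectation (\<lambda>x. (g x)\<^sup>2))"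
  have fM: "f \<in> borel_measurable M" and gM: "g \<in> borel_measurable M"
    using f g by (auto intro: measurable_from_subalg[OF subalgebra_sigma_gen])
  have "corr M f g \<le> r"
    using corr_le_max_corr[OF subalgebra_sigma_gen subalgebra_sigma_gen f g f2 g2]
      max_corr_le_rho'[OF assms(1-5)] r by linarith
  moreover have "corr M f g = expectation (\<lambda>x. f x * g x) / d"
    unfolding corr_def d_def f0 g0 by (simp add: real_sqrt_mult)
  moreover have "expectation (\<lambda>x. f x * g x) \<le> d"
    unfolding d_def by (rule integral_mult_le_sqrt[OF fM gM f2 g2])
  moreover have "0 \<le> d"
    unfolding d_def by (intro mult_nonneg_nonneg real_sqrt_ge_zero integral_nonneg) auto
  ultimately show ?thesis
    unfolding d_def[symmetric] by (cases "d = 0") (auto simp: pos_divide_le_eq)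
qed

lemma integral_Re_mult_cnj_le:
  assumes "finite S" "S \<noteq> {}" "finite T" "T \<noteq> {}" "separated n u S T"
    and r: "rho' M X n \<le> r" "0 \<le> r"
    and U: "U \<in> borel_measurable (sigma_gen M X S)" "square_integrable M U" "expectation U = 0"
    and V: "V \<in> borel_measurable (sigma_gen M X T)" "square_integrable M V" "expectation V = 0"
  shows "expectation (\<lambda>x. Re (U x * cnj (V x)))
    \<le> r * sqrt (second_moment M U) * sqrt (second_moment M V)"
proof -
  define a1 a2 b1 b2 where
    "a1 = sqrt (expectation (\<lambda>x. (Re (U x))\<^sup>2))" "a2 = sqrt (expectation (\<lambda>x. (Im (U x))\<^sup>2))"
    "b1 = sqrt (expectation (\<lambda>x. (Re (V x))\<^sup>2))" "b2 = sqrt (expectation (\<lambda>x. (Im (V x))\<^sup>2))"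
  have centered_parts: "expectation (\<lambda>x. Re (U x)) = 0" "expectation (\<lambda>x. Im (U x)) = 0"
    "expectation (\<lambda>x. Re (V x)) = 0" "expectation (\<lambda>x. Im (V x)) = 0"
    using U V by (simp_all add: integral_Re_Im integrable_if_square_integrable)
  have "expectation (\<lambda>x. Re (U x) * Re (V x)) \<le> r * (a1 * b1)"
    "expectation (\<lambda>x. Im (U x) * Im (V x)) \<le> r * (a2 * b2)"
    unfolding a1_a2_b1_b2_def using U V centered_parts
    by (auto intro!: integral_mult_le_rho'[OF assms(1-5) _ _ _ _ _ _ r(1)]
        integrable_Re_square integrable_Im_square)
  moreover have "expectation (\<lambda>x. Re (U x * cnj (V x)))
      = expectation (\<lambda>x. Re (U x) * Re (V x)) + expectation (\<lambda>x. Im (U x) * Im (V x))"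
  proof -
    have "U \<in> borel_measurable M" "V \<in> borel_measurable M"
      using U(2) V(2) unfolding square_integrable_def by auto
    then have "integrable M (\<lambda>x. Re (U x) * Re (V x))" "integrable M (\<lambda>x. Im (U x) * Im (V x))"
      using U(2) V(2) by (auto intro!: integrable_mult_if_square_integrable
          integrable_Re_square integrable_Im_square)
    then show ?thesis by simp
  qed
  ultimately have "expectation (\<lambda>x. Re (U x * cnj (V x))) \<le> r * (a1 * b1 + a2 * b2)"
    by (simp add: distrib_left)
  also have "\<dots> \<le> r * (sqrt (a1\<^sup>2 + a2\<^sup>2) * sqrt (b1\<^sup>2 + b2\<^sup>2))"
    using r(2) by (intro mult_left_mono sum_mult_le_sqrt_sum_squares)
  also have "\<dots> = r * sqrt (second_moment M U) * sqrt (second_moment M V)"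
    using U(2) V(2) unfolding a1_a2_b1_b2_def by (simp add: second_moment_Re_Im integral_nonneg)
  finally show ?thesis .
qed

lemma square_integrable_X: "square_integrable M (X k)"
  unfolding square_integrable_def using integrable_square_X by simp

lemma square_integrable_lin_comb: "square_integrable M (\<lambda>x. \<Sum>k\<in>A. c k * X k x)"
  by (intro square_integrable_sum square_integrable_cmult square_integrable_X)

lemma expectation_lin_comb: "expectation (\<lambda>x. \<Sum>k\<in>A. c k * X k x) = 0"
  using integrable_if_square_integrable[OF square_integrable_X] by (simp add: centered)

lemma measurable_lin_comb: "(\<lambda>x. \<Sum>k\<in>A. c k * X k x) \<in> borel_measurable (sigma_gen M X A)"
proof (rule borel_measurable_sum)
  fix k assume "k \<in> A"
  then show "(\<lambda>x. c k * X k x) \<in> borel_measurable (sigma_gen M X A)"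
    using measurable_sigma_gen by measurable
qed

lemma integral_Re_mult_cnj_lin_comb_le:
  assumes "finite A" "finite B" "separated n u A B" "rho' M X n \<le> r" "0 \<le> r"
  shows "expectation (\<lambda>x. Re ((\<Sum>k\<in>A. c k * X k x) * cnj (\<Sum>k\<in>B. d k * X k x)))
    \<le> r * sqrt (second_moment M (\<lambda>x. \<Sum>k\<in>A. c k * X k x))
        * sqrt (second_moment M (\<lambda>x. \<Sum>k\<in>B. d k * X k x))"
proof (cases "A = {} \<or> B = {}")
  case True
  then show ?thesis using assms(5) by (auto intro!: mult_nonneg_nonneg simp: second_moment_nonneg)
next
  case False
  then show ?thesis
    by (intro integral_Re_mult_cnj_le[OF assms(1) _ assms(2) _ assms(3-5)] measurable_lin_comb
        square_integrable_lin_comb expectation_lin_comb) auto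
qed

lemma second_moment_lin_comb_le_slices:
  assumes F: "finite F" and N: "N > 0" and rho': "rho' M X N \<le> 1/2"
  shows "second_moment M (\<lambda>x. \<Sum>k\<in>F. c k * X k x)
     \<le> 3 * N * (\<Sum>t\<in>(\<lambda>k. k$u) ` F. second_moment M (\<lambda>x. \<Sum>k\<in>{k\<in>F. k$u = t}. c k * X k x))"
proof -
  define T where "T = (\<lambda>k. k$u) ` F"
  define W where "W t = (\<lambda>x. \<Sum>k\<in>{k\<in>F. k$u = t}. c k * X k x)" for t
  \<comment> \<open>Distinct slices in one residue class mod N are N-separated in coordinate u.\<close>
  define block where "block j = {t\<in>T. t mod int N = j}" for j
  have T: "finite T" "finite (block j)" for j
    unfolding T_def block_def using F by simp_all
  have W: "square_integrable M (W t)" for t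
    unfolding W_def by (rule square_integrable_lin_comb)
  have W_union: "(\<Sum>t\<in>P. W t x) = (\<Sum>k\<in>{k\<in>F. k$u \<in> P}. c k * X k x)" if "finite P" for P x
    unfolding W_def using F that
    by (subst sum.group[symmetric, where g="\<lambda>k. k$u"]) (auto intro!: sum.cong)
  have block_bound:
    "second_moment M (\<lambda>x. \<Sum>t\<in>block j. W t x) \<le> 3 * (\<Sum>t\<in>block j. second_moment M (W t))" for j
  proof (rule second_moment_sum_le_three[OF T(2) W])
    fix P assume P: "P \<subseteq> block j"
    have sep: "separated N u {k\<in>F. k$u \<in> P} {k\<in>F. k$u \<in> block j - P}"
      unfolding separated_def
    proof (intro ballI)
      fix k l assume "k \<in> {k\<in>F. k$u \<in> P}" "l \<in> {k\<in>F. k$u \<in> block j - P}"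
      then have "int N dvd (k$u - l$u)" "k$u - l$u \<noteq> 0"
        using P unfolding block_def by (auto simp: mod_eq_dvd_iff)
      then have "\<bar>int N\<bar> \<le> \<bar>k$u - l$u\<bar>" by (intro dvd_imp_le_int)
      then show "int N \<le> \<bar>k$u - l$u\<bar>" by simp
    qed
    have fin: "finite P" "finite (block j - P)"
      using P T(2) by (auto intro: finite_subset)
    show "expectation (\<lambda>x. Re ((\<Sum>t\<in>P. W t x) * cnj (\<Sum>t\<in>block j - P. W t x)))
      \<le> 1/2 * sqrt (second_moment M (\<lambda>x. \<Sum>t\<in>P. W t x))
            * sqrt (second_moment M (\<lambda>x. \<Sum>t\<in>block j - P. W t x))"
      unfolding W_union[OF fin(1)] W_union[OF fin(2)]
      by (rule integral_Re_mult_cnj_lin_comb_le[OF _ _ sep rho']) (use F in auto)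
  qed
  have "(\<Sum>j\<in>{0..<int N}. \<Sum>t\<in>block j. W t x) = (\<Sum>t\<in>T. W t x)" for x
    unfolding block_def by (rule sum.group) (use T N in auto)
  also have "(\<Sum>t\<in>T. W t x) = (\<Sum>k\<in>F. c k * X k x)" for x
  proof -
    have "{k\<in>F. k$u \<in> T} = F" unfolding T_def by auto
    then show ?thesis using W_union[OF T(1)] by simp
  qed
  finally have "second_moment M (\<lambda>x. \<Sum>k\<in>F. c k * X k x)
      = second_moment M (\<lambda>x. \<Sum>j\<in>{0..<int N}. \<Sum>t\<in>block j. W t x)"
    by simp
  also have "\<dots> \<le> N * (\<Sum>j\<in>{0..<int N}. second_moment M (\<lambda>x. \<Sum>t\<in>block j. W t x))"
    using second_moment_sum_le_card[of "{0..<int N}" M "\<lambda>j x. \<Sum>t\<in>block j. W t x"] W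
    by (simp add: square_integrable_sum)
  also have "\<dots> \<le> N * (\<Sum>j\<in>{0..<int N}. 3 * (\<Sum>t\<in>block j. second_moment M (W t)))"
    by (intro mult_left_mono sum_mono block_bound) auto
  also have "(\<Sum>j\<in>{0..<int N}. 3 * (\<Sum>t\<in>block j. second_moment M (W t)))
      = 3 * (\<Sum>t\<in>T. second_moment M (W t))"
    unfolding sum_distrib_left[symmetric] block_def using T N by (subst sum.group) auto
  finally show ?thesis unfolding T_def W_def by simp
qed

lemma second_moment_lin_comb_le_card_coords:
  assumes N: "N > 0" and rho': "rho' M X N \<le> 1/2" and s: "\<And>k. second_moment M (X k) = s"
    and J: "finite J" and F: "finite F" and c: "\<forall>k\<in>F. cmod (c k) \<le> 1"
    and flat: "\<forall>k\<in>F. \<forall>l\<in>F. \<forall>j. j \<notin> J \<longrightarrow> k$j = l$j"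
  shows "second_moment M (\<lambda>x. \<Sum>k\<in>F. c k * X k x) \<le> (3 * real N) ^ card J * s * real (card F)"
  using J F c flat
proof (induction J arbitrary: F rule: finite_induct)
  case empty
  show ?case
  proof (cases "F = {}")
    case False
    then obtain k where "k \<in> F" by auto
    have "l = k" if "l \<in> F" for l
      using empty.prems(3) \<open>k \<in> F\<close> that unfolding vec_eq_iff by blast
    with \<open>k \<in> F\<close> have "F = {k}" by blast
    moreover have "(cmod (c k))\<^sup>2 * s \<le> s"
      using empty.prems \<open>F = {k}\<close> s[of k] second_moment_nonneg[of M "X k"]
      by (simp add: mult_left_le_one_le power_le_one)
    ultimately show ?thesis by (simp add: second_moment_cmult s)
  qed (simp add: second_moment_def)
next
  case (insert u J)
  define K where "K = (3 * real N) ^ card J * s"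
  have "second_moment M (\<lambda>x. \<Sum>k\<in>F. c k * X k x)
     \<le> 3 * real N * (\<Sum>t\<in>(\<lambda>k. k$u) ` F. second_moment M (\<lambda>x. \<Sum>k\<in>{k\<in>F. k$u = t}. c k * X k x))"
    by (rule second_moment_lin_comb_le_slices[OF insert.prems(1) N rho'])
  also have "\<dots> \<le> 3 * real N * (\<Sum>t\<in>(\<lambda>k. k$u) ` F. K * card {k\<in>F. k$u = t})"
  proof (intro mult_left_mono sum_mono)
    fix t
    show "second_moment M (\<lambda>x. \<Sum>k\<in>{k\<in>F. k$u = t}. c k * X k x) \<le> K * card {k\<in>F. k$u = t}"
    proof (unfold K_def, rule insert.IH)
      show "\<forall>k\<in>{k\<in>F. k$u = t}. \<forall>l\<in>{k\<in>F. k$u = t}. \<forall>j. j \<notin> J \<longrightarrow> k$j = l$j"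
      proof (intro ballI allI impI)
        fix k l j assume k: "k \<in> {k\<in>F. k$u = t}" and l: "l \<in> {k\<in>F. k$u = t}" and "j \<notin> J"
        then show "k$j = l$j"
          using insert.prems(3) by (cases "j = u") auto
      qed
    qed (use insert.prems in auto)
  qed simp
  also have "(\<Sum>t\<in>(\<lambda>k. k$u) ` F. K * card {k\<in>F. k$u = t}) = K * card F"
  proof -
    have "(\<Sum>t\<in>(\<lambda>k. k$u) ` F. \<Sum>k\<in>{k\<in>F. k$u = t}. 1::real) = (\<Sum>k\<in>F. 1)"
      by (rule sum.group) (use insert.prems(1) in auto)
    then show ?thesis by (simp add: sum_distrib_left[symmetric])
  qed
  finally show ?case
    using insert.hyps unfolding K_def by (simp add: algebra_simps)
qed

lemma second_moment_lin_comb_le_card: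
  assumes "N > 0" "rho' M X N \<le> 1/2" "\<And>k. second_moment M (X k) = s"
    and "finite F" "\<forall>k\<in>F. cmod (c k) \<le> 1"
  shows "second_moment M (\<lambda>x. \<Sum>k\<in>F. c k * X k x) \<le> (3 * real N) ^ CARD('d) * s * real (card F)"
  using second_moment_lin_comb_le_card_coords[OF assms(1-3) finite_class.finite_UNIV assms(4,5)] by simp

lemma expectation_mult_lin_comb:
  assumes "finite A" "finite B"
  shows "expectation (\<lambda>x. (\<Sum>k\<in>A. a k * X k x) * (\<Sum>j\<in>B. b j * X j x))
       = (\<Sum>k\<in>A. \<Sum>j\<in>B. a k * b j * expectation (\<lambda>x. X k x * X j x))"
proof -
  have "integrable M (\<lambda>x. X k x * X j x)" for k j
    by (rule integrable_mult_if_square_integrable_complex[OF square_integrable_X square_integrable_X])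
  then show ?thesis
    by (simp add: sum_product algebra_simps Bochner_Integration.integral_sum
        Bochner_Integration.integrable_sum)
qed

end

locale stationary_random_field = centered_random_field M X
  for M :: "'a measure" and X :: "int^'d \<Rightarrow> 'a \<Rightarrow> complex" +
  assumes second_moment_X: "\<And>k. second_moment M (X k) = second_moment M (X 0)"
    and stationary: "\<And>k j. expectation (\<lambda>\<omega>. X k \<omega> * X j \<omega>) = expectation (\<lambda>\<omega>. X (k - j) \<omega> * X 0 \<omega>)"
begin

lemma expectation_shifted_product:
  assumes B: "finite B"
  shows "expectation (\<lambda>x. (\<Sum>k\<in>(\<lambda>k. k + axis u 1) ` B. phase \<mu>1 k * X k x)
                        * (\<Sum>k\<in>(\<lambda>k. k + axis u 1) ` B. phase \<mu>2 k * X k x))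
     = exp (- \<i> * of_real (\<mu>1$u + \<mu>2$u))
       * expectation (\<lambda>x. (\<Sum>k\<in>B. phase \<mu>1 k * X k x) * (\<Sum>k\<in>B. phase \<mu>2 k * X k x))"
proof -
  have inj: "inj_on (\<lambda>k. k + axis u 1) B" by (auto intro: inj_onI)
  have shift: "expectation (\<lambda>x. X (k + axis u 1) x * X (j + axis u 1) x)
      = expectation (\<lambda>x. X k x * X j x)" for k j
    using stationary[of "k + axis u 1" "j + axis u 1"] stationary[of k j] by simp
  have "expectation (\<lambda>x. (\<Sum>k\<in>(\<lambda>k. k + axis u 1) ` B. phase \<mu>1 k * X k x)
                        * (\<Sum>k\<in>(\<lambda>k. k + axis u 1) ` B. phase \<mu>2 k * X k x))
      = (\<Sum>k\<in>B. \<Sum>j\<in>B. phase \<mu>1 (k + axis u 1) * phase \<mu>2 (j + axis u 1)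
          * expectation (\<lambda>x. X (k + axis u 1) x * X (j + axis u 1) x))"
    using B by (simp only: expectation_mult_lin_comb finite_imageI) (simp add: sum.reindex[OF inj])
  also have "\<dots> = exp (- \<i> * of_real (\<mu>1$u + \<mu>2$u))
      * (\<Sum>k\<in>B. \<Sum>j\<in>B. phase \<mu>1 k * phase \<mu>2 j * expectation (\<lambda>x. X k x * X j x))"
    unfolding shift phase_add_axis sum_distrib_left
    by (intro sum.cong refl) (simp add: algebra_simps flip: exp_add)
  also have "\<dots> = exp (- \<i> * of_real (\<mu>1$u + \<mu>2$u))
      * expectation (\<lambda>x. (\<Sum>k\<in>B. phase \<mu>1 k * X k x) * (\<Sum>k\<in>B. phase \<mu>2 k * X k x))"
    using B by (simp add: expectation_mult_lin_comb)
  finally show ?thesis .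
qed

lemma cross_moment_le_sym_diff:
  fixes v :: "nat^'d" and u :: 'd
  assumes N: "N > 0" "rho' M X N \<le> 1/2"
  defines "C \<equiv> (3 * real N) ^ CARD('d) * second_moment M (X 0)"
    and "Sd \<equiv> sym_diff ((\<lambda>k. k + axis u 1) ` box v) (box v)"
  shows "cmod (exp (- \<i> * of_real (\<mu>1$u + \<mu>2$u)) - 1)
           * cmod (expectation (\<lambda>\<omega>. partial_sum X v \<mu>1 \<omega> * partial_sum X v \<mu>2 \<omega>))
         \<le> 2 * C * sqrt (real (card Sd) * real (vol v))"
proof -
  define B' where "B' = (\<lambda>k. k + axis u 1) ` box v"
  define T where "T \<mu> = (\<lambda>x. \<Sum>k\<in>box v. phase \<mu> k * X k x)" for \<mu>
  define D where "D \<mu> = (\<lambda>x. \<Sum>k\<in>Sd. (if k \<in> B' then phase \<mu> k else - phase \<mu> k) * X k x)" for \<mu>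
  have fin: "finite (box v)" "finite B'" "finite Sd"
    unfolding B'_def Sd_def using finite_box by auto
  have "card B' = vol v"
    unfolding B'_def by (subst card_image) (auto intro: inj_onI simp: card_box)
  have shifted: "T \<mu> x + D \<mu> x = (\<Sum>k\<in>B'. phase \<mu> k * X k x)" for \<mu> x
    unfolding T_def D_def Sd_def B'_def
    by (rule sum_eq_sum_add_sum_sym_diff[symmetric]) (use fin in auto)
  have C0: "0 \<le> C"
    unfolding C_def by (simp add: second_moment_nonneg)
  have bound: "second_moment M (\<lambda>x. \<Sum>k\<in>A. c k * X k x) \<le> C * real (card A)"
    if "finite A" "\<And>k. cmod (c k) = 1" for A c
    unfolding C_def using that by (intro second_moment_lin_comb_le_card[OF N second_moment_X]) auto
  have sm: "second_moment M (T \<mu>) \<le> C * real (vol v)"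
    "second_moment M (\<lambda>x. T \<mu> x + D \<mu> x) \<le> C * real (vol v)"
    "second_moment M (D \<mu>) \<le> C * real (card Sd)" for \<mu>
    using bound[OF fin(1)] bound[OF fin(2)] bound[OF fin(3)] \<open>card B' = vol v\<close>
    unfolding shifted unfolding T_def D_def by (auto simp: norm_phase card_box)
  have "expectation (\<lambda>x. (T \<mu>1 x + D \<mu>1 x) * (T \<mu>2 x + D \<mu>2 x))
      = exp (- \<i> * of_real (\<mu>1$u + \<mu>2$u)) * expectation (\<lambda>x. T \<mu>1 x * T \<mu>2 x)"
    unfolding shifted B'_def using expectation_shifted_product[OF fin(1)] by (simp add: T_def)
  then have "cmod (exp (- \<i> * of_real (\<mu>1$u + \<mu>2$u)) - 1) * cmod (expectation (\<lambda>x. T \<mu>1 x * T \<mu>2 x))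
      \<le> sqrt (second_moment M (D \<mu>1)) * sqrt (second_moment M (\<lambda>x. T \<mu>2 x + D \<mu>2 x))
        + sqrt (second_moment M (T \<mu>1)) * sqrt (second_moment M (D \<mu>2))"
    unfolding T_def D_def by (intro norm_sub_one_mult_integral_le square_integrable_lin_comb)
  also have "\<dots> \<le> sqrt (C * real (card Sd)) * sqrt (C * real (vol v))
        + sqrt (C * real (vol v)) * sqrt (C * real (card Sd))"
    by (intro add_mono mult_mono real_sqrt_le_mono sm) (auto simp: second_moment_nonneg C0)
  also have "\<dots> = 2 * C * sqrt (real (card Sd) * real (vol v))"
    using C0 by (simp add: real_sqrt_mult algebra_simps)
  finally show ?thesis
    unfolding T_def partial_sum_eq_lin_comb .
qed

lemma cross_moment_le:
  assumes N: "N > 0" "rho' M X N \<le> 1/2" and v: "\<And>j. 1 \<le> v$j"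
  shows "cmod (exp (- \<i> * of_real (\<mu>1$u + \<mu>2$u)) - 1)
        * cmod (expectation (\<lambda>\<omega>. partial_sum X v \<mu>1 \<omega> * partial_sum X v \<mu>2 \<omega> / of_nat (vol v)))
      \<le> 2 * sqrt 2 * ((3 * real N) ^ CARD('d) * second_moment M (X 0)) / sqrt (v$u)"
proof -
  define C where "C = (3 * real N) ^ CARD('d) * second_moment M (X 0)"
  define Sd where "Sd = sym_diff ((\<lambda>k. k + axis u 1) ` box v) (box v)"
  define V where "V = real (vol v)"
  have V: "0 < V"
    unfolding V_def vol_def using v by (simp add: prod_pos less_le_trans[OF zero_less_one])
  have "cmod (exp (- \<i> * of_real (\<mu>1$u + \<mu>2$u)) - 1)
        * cmod (expectation (\<lambda>\<omega>. partial_sum X v \<mu>1 \<omega> * partial_sum X v \<mu>2 \<omega> / of_nat (vol v)))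
      = cmod (exp (- \<i> * of_real (\<mu>1$u + \<mu>2$u)) - 1)
        * cmod (expectation (\<lambda>\<omega>. partial_sum X v \<mu>1 \<omega> * partial_sum X v \<mu>2 \<omega>)) / V"
    unfolding V_def by (simp add: norm_divide)
  also have "\<dots> \<le> 2 * C * sqrt (real (card Sd) * V) / V"
    using cross_moment_le_sym_diff[OF N] V unfolding C_def Sd_def V_def by (intro divide_right_mono) auto
  also have "\<dots> \<le> 2 * C * (V * sqrt 2 / sqrt (v$u)) / V"
  proof (intro divide_right_mono mult_left_mono sqrt_mult_le_of_mult_le)
    show "real (card Sd) * real (v$u) \<le> 2 * V"
      using card_box_shift_sym_diff[of u v] unfolding Sd_def V_def by (simp flip: of_nat_mult)
  qed (use v[of u] V in \<open>auto simp: C_def second_moment_nonneg\<close>)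
  also have "\<dots> = 2 * sqrt 2 * C / sqrt (v$u)"
    using V by simp
  finally show ?thesis unfolding C_def .
qed

lemma cross_moment_tendsto_zero:
  assumes mixing: "(\<lambda>n. rho' M X n) \<longlonglongrightarrow> 0"
    and lam: "exp (- \<i> * of_real (lam$u + lam$u)) \<noteq> 1" "lam1 \<longlonglongrightarrow> lam" "lam2 \<longlonglongrightarrow> lam"
    and v: "\<And>n j. 1 \<le> v n $ j" "filterlim (\<lambda>n. v n $ u) at_top sequentially"
  shows "(\<lambda>n. expectation (\<lambda>\<omega>. partial_sum X (v n) (lam1 n) \<omega> * partial_sum X (v n) (lam2 n) \<omega>
                / of_nat (vol (v n)))) \<longlonglongrightarrow> 0"
proof -
  obtain N0 where N0: "\<And>n. n \<ge> N0 \<Longrightarrow> rho' M X n < 1/2"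
    using order_tendstoD(2)[OF mixing, of "1/2"] by (auto simp: eventually_sequentially)
  have N: "Suc N0 > 0" "rho' M X (Suc N0) \<le> 1/2"
    using N0[of "Suc N0"] by auto
  define C where "C = 2 * sqrt 2 * ((3 * real (Suc N0)) ^ CARD('d) * second_moment M (X 0))"
  have factor: "(\<lambda>n. cmod (exp (- \<i> * of_real (lam1 n $ u + lam2 n $ u)) - 1))
      \<longlonglongrightarrow> cmod (exp (- \<i> * of_real (lam$u + lam$u)) - 1)"
    using lam(2,3) by (intro tendsto_intros)
  have bound: "(\<lambda>n. C / sqrt (v n $ u)) \<longlonglongrightarrow> 0"
    using v(2) by (intro tendsto_divide_0[OF tendsto_const] filterlim_at_top_imp_at_infinity
        filterlim_compose[OF sqrt_at_top] filterlim_compose[OF filterlim_real_sequentially])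
  have "\<forall>\<^sub>F n in sequentially. cmod (exp (- \<i> * of_real (lam1 n $ u + lam2 n $ u)) - 1)
      * norm (expectation (\<lambda>\<omega>. partial_sum X (v n) (lam1 n) \<omega> * partial_sum X (v n) (lam2 n) \<omega>
          / of_nat (vol (v n)))) \<le> C / sqrt (v n $ u)"
    unfolding C_def by (intro always_eventually allI cross_moment_le[OF N v(1)])
  then show ?thesis
    using lam(1) by (intro tendsto_zero_if_mult_le[OF factor _ bound]) simp_all
qed

end

theorem lemma2p2:
  fixes M :: "'a measure" and X :: "int^'d \<Rightarrow> 'a \<Rightarrow> complex"
    and lam :: "real^'d" and lam1 lam2 :: "nat \<Rightarrow> real^'d" and v :: "nat \<Rightarrow> nat^'d"
  assumes "prob_space M"
    and meas: "\<And>k. X k \<in> borel_measurable M"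
    and sq: "\<And>k. integrable M (\<lambda>\<omega>. (cmod (X k \<omega>))\<^sup>2)"
    and sq_eq: "\<And>k. (\<integral>\<omega>. (cmod (X k \<omega>))\<^sup>2 \<partial>M) = (\<integral>\<omega>. (cmod (X 0 \<omega>))\<^sup>2 \<partial>M)"
    and centered: "\<And>k. (\<integral>\<omega>. X k \<omega> \<partial>M) = 0"
    and mixing: "(\<lambda>n. rho' M X n) \<longlonglongrightarrow> 0"
    and stat: "\<And>k j. (\<integral>\<omega>. X k \<omega> * X j \<omega> \<partial>M) = (\<integral>\<omega>. X (k - j) \<omega> * X 0 \<omega> \<partial>M)"
    and lam_box: "\<forall>j. - pi < lam$j \<and> lam$j \<le> pi"
    and lam_P: "\<exists>j. lam$j \<notin> {- pi, 0, pi}"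
    and lam1_box: "\<And>n. \<forall>j. - pi < lam1 n $ j \<and> lam1 n $ j \<le> pi"
    and lam2_box: "\<And>n. \<forall>j. - pi < lam2 n $ j \<and> lam2 n $ j \<le> pi"
    and lam1_lim: "lam1 \<longlonglongrightarrow> lam"
    and lam2_lim: "lam2 \<longlonglongrightarrow> lam"
    and v_pos: "\<And>n j. 1 \<le> v n $ j"
    and v_lim: "filterlim (\<lambda>n. Min (range (\<lambda>j. v n $ j))) at_top sequentially"
  shows "(\<lambda>n. \<integral>\<omega>. partial_sum X (v n) (lam1 n) \<omega> * partial_sum X (v n) (lam2 n) \<omega>
                    / of_nat (vol (v n)) \<partial>M) \<longlonglongrightarrow> 0"
proof -
  interpret stationary_random_field M X
    unfolding stationary_random_field_def stationary_random_field_axioms_def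
      centered_random_field_def centered_random_field_axioms_def second_moment_def
    using assms(1) meas sq sq_eq centered stat by auto
  obtain u where u: "lam$u \<notin> {- pi, 0, pi}"
    using lam_P by auto
  have "filterlim (\<lambda>n. v n $ u) at_top sequentially"
    by (rule filterlim_at_top_mono[OF v_lim]) (auto intro: always_eventually Min_le)
  then show ?thesis
    using exp_neg_ii_double_neq_1[of "lam$u"] lam_box u
    by (intro cross_moment_tendsto_zero[OF mixing _ lam1_lim lam2_lim v_pos]) auto
qed

end
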